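(* Let $G$ be a topological rough group, with topology $\tau$ on $\overline{G}$ and subspace topology $\tau_G$ on $G$, such that the rough identity $e$ belongs to $G$, $\overline{G}$ is closed under multiplication, and $G$ is an open set in $(\overline{G},\tau)$. Let $\mathcal{B}$ be a base for $\tau_G$ and $\mathcal{B}_e=\{O\in\mathcal{B}: e\in O\}$. Then for every $g\in G$, the base at $g$ in $\overline{G}$ is given by $\mathcal{B}_g=\{gO: O\in\mathcal{B}_e\}$; that is, for every open set $V$ of $\overline{G}$ with $g\in V$ there is $O\in\mathcal{B}_e$ with $gO\subseteq V$.
   Context: An approximation space is a pair $(U,R)$ with $U$ a set and $R$ an equivalence relation on $U$; for $X\subseteq U$, $\overline{X}=\bigcup\{[x]_R : [x]_R\cap X\neq\emptyset\}$. Let $U$ carry a binary operation written $xy$. A subset $G\subseteq U$ is a rough group if: (1) $xy\in\overline{G}$ for all $x,y\in G$; (2) $(xy)z=x(yz)$ for all $x,y,z\in\overline{G}$; (3) there is $e\in\overline{G}$ with $xe=ex=x$ for all $x\in G$; (4) for every $x\in G$ there is $y\in G$ with $xy=yx=e$ (written $x^{-1}$). A topological rough group is a rough group $G$ with a topology $\tau$ on $\overline{G}$, $\tau_G$ the subspace topology on $G$, such that $G\times G\to\overline{G}$, $(x,y)\mapsto xy$, is continuous (product of $\tau_G$ to $\tau$) and $G\to G$, $x\mapsto x^{-1}$, is continuous for $\tau_G$. For a base $\mathcal{B}$ of $\tau_G$ and a point $g$, the family $\{O\in\mathcal{B}: g\in O\}$ is called the base at $g$; $gO=\{go:o\in O\}$.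 *)

theory Defs
  imports "HOL-Analysis.Analysis"
begin

definition approx_space :: "'a set \<Rightarrow> ('a \<times> 'a) set \<Rightarrow> bool" where
  "approx_space U R \<longleftrightarrow> equiv U R"

definition upper_approx :: "'a set \<Rightarrow> ('a \<times> 'a) set \<Rightarrow> 'a set \<Rightarrow> 'a set" where
  "upper_approx U R X = \<Union>{R `` {x} | x. x \<in> U \<and> R `` {x} \<inter> X \<noteq> {}}"

definition rough_group ::
  "'a set \<Rightarrow> ('a \<times> 'a) set \<Rightarrow> ('a \<Rightarrow> 'a \<Rightarrow> 'a) \<Rightarrow> 'a set \<Rightarrow> 'a \<Rightarrow> bool" where
  "rough_group U R op G e \<longleftrightarrow>
     approx_space U R \<and> (\<forall>x\<in>U. \<forall>y\<in>U. op x y \<in> U) \<and> G \<subseteq> U \<and>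
     (\<forall>x\<in>G. \<forall>y\<in>G. op x y \<in> upper_approx U R G) \<and>
     (\<forall>x\<in>upper_approx U R G. \<forall>y\<in>upper_approx U R G. \<forall>z\<in>upper_approx U R G.
        op (op x y) z = op x (op y z)) \<and>
     e \<in> upper_approx U R G \<and> (\<forall>x\<in>G. op x e = x \<and> op e x = x) \<and>
     (\<forall>x\<in>G. \<exists>y\<in>G. op x y = e \<and> op y x = e)"

text \<open>The inverse x^{-1} in G (unique in a rough group).\<close>
definition rough_inv :: "('a \<Rightarrow> 'a \<Rightarrow> 'a) \<Rightarrow> 'a set \<Rightarrow> 'a \<Rightarrow> 'a \<Rightarrow> 'a" where
  "rough_inv op G e x = (THE y. y \<in> G \<and> op x y = e \<and> op y x = e)"

definition top_rough_group ::
  "'a set \<Rightarrow> ('a \<times> 'a) set \<Rightarrow> ('a \<Rightarrow> 'a \<Rightarrow> 'a) \<Rightarrow> 'a set \<Rightarrow> 'a \<Rightarrow> 'a topology \<Rightarrow> bool" where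
  "top_rough_group U R op G e T \<longleftrightarrow>
     rough_group U R op G e \<and> topspace T = upper_approx U R G \<and>
     continuous_map (prod_topology (subtopology T G) (subtopology T G)) T (\<lambda>(x, y). op x y) \<and>
     continuous_map (subtopology T G) (subtopology T G) (rough_inv op G e)"

definition is_base :: "'a topology \<Rightarrow> 'a set set \<Rightarrow> bool" where
  "is_base X B \<longleftrightarrow> (\<forall>S\<in>B. openin X S) \<and>
     (\<forall>W. openin X W \<longrightarrow> (\<exists>B'\<subseteq>B. \<Union>B' = W))"

end

theory Submission
  imports Defs
begin

text \<open>Left translation by g is continuous on G, being the restriction of the jointly continuous
  multiplication to the slice {g} \<times> G, and it sends e to g. So the translation-preimage of a
  neighbourhood V of g is a neighbourhood of e in G, which contains a basic set O \<ni> e with gO \<subseteq> V.\<close>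

lemma continuous_map_slice:
  assumes "continuous_map (prod_topology X Y) Z f" and "a \<in> topspace X"
  shows "continuous_map Y Z (\<lambda>y. f (a, y))"
proof -
  have "continuous_map Y (prod_topology X Y) (\<lambda>y. (a, y))"
    using assms(2) by (intro continuous_map_pairedI) (simp_all add: continuous_map_id[unfolded id_def])
  then show ?thesis
    using continuous_map_compose[OF _ assms(1)] by (simp add: o_def)
qed

lemma is_base_neighbourhood:
  assumes "is_base X B" and "openin X W" and "x \<in> W"
  obtains S where "S \<in> B" and "x \<in> S" and "S \<subseteq> W"
  using assms unfolding is_base_def by blast

lemma subset_upper_approx:
  assumes "equiv U R" and "X \<subseteq> U"
  shows "X \<subseteq> upper_approx U R X"
proof
  fix x assume "x \<in> X"
  with assms have "x \<in> R `` {x}" and "R `` {x} \<inter> X \<noteq> {}" and "x \<in> U"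
    by (auto simp: equiv_def refl_on_def)
  then show "x \<in> upper_approx U R X"
    unfolding upper_approx_def by blast
qed

lemma top_rough_group_continuous_translation:
  assumes "top_rough_group U R op G e T" and "g \<in> G"
  shows "continuous_map (subtopology T G) T (op g)"
proof -
  have "continuous_map (prod_topology (subtopology T G) (subtopology T G)) T (\<lambda>(x, y). op x y)"
    using assms(1) unfolding top_rough_group_def by blast
  moreover have "g \<in> topspace (subtopology T G)"
    using assms subset_upper_approx[of U R G]
    unfolding top_rough_group_def rough_group_def approx_space_def by auto
  ultimately show ?thesis
    using continuous_map_slice by fastforce
qed

lemma top_rough_group_right_identity:
  assumes "top_rough_group U R op G e T" and "g \<in> G"
  shows "op g e = g"
  using assms unfolding top_rough_group_def rough_group_def by blast

theorem mainTheorem9: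
  fixes U :: "'a set" and R :: "('a \<times> 'a) set" and op :: "'a \<Rightarrow> 'a \<Rightarrow> 'a"
    and G :: "'a set" and e :: 'a and T :: "'a topology" and B :: "'a set set"
  assumes "top_rough_group U R op G e T"
    and "e \<in> G"
    and "\<forall>x\<in>upper_approx U R G. \<forall>y\<in>upper_approx U R G. op x y \<in> upper_approx U R G"
    and "openin T G"
    and "is_base (subtopology T G) B"
  shows "\<forall>g\<in>G. \<forall>V. openin T V \<and> g \<in> V \<longrightarrow>
           (\<exists>S\<in>{S\<in>B. e \<in> S}. op g ` S \<subseteq> V)"
proof (intro ballI allI impI)
  fix g V
  assume g: "g \<in> G" and V: "openin T V \<and> g \<in> V"
  define W where "W = {x \<in> topspace (subtopology T G). op g x \<in> V}"
  have "openin (subtopology T G) W"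
    unfolding W_def
    using openin_continuous_map_preimage[OF top_rough_group_continuous_translation[OF assms(1) g]] V
    by blast
  moreover have "e \<in> W"
    using assms(1,2) g V top_rough_group_right_identity[OF assms(1) g]
    unfolding W_def top_rough_group_def rough_group_def by auto
  ultimately obtain S where "S \<in> B" "e \<in> S" "S \<subseteq> W"
    using is_base_neighbourhood[OF assms(5)] by blast
  then show "\<exists>S\<in>{S\<in>B. e \<in> S}. op g ` S \<subseteq> V"
    unfolding W_def by blast
qed

end
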